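(* Let $M$ be a left cancellative monoid which is strongly $\delta$-hyperbolic (for some real $\delta \geq 0$) with respect to some finite generating set. Then $M$ is finitely presented, and (any finite presentation of) $M$ has Dehn function bounded above by a polynomial of degree $\log_{4/3} 5 + 1$.
   Context: Directed graphs may have loops and multiple edges. For vertices $u,v$ of a directed graph, $d(u,v)$ is the length of a shortest directed path from $u$ to $v$, or $\infty$ if there is none. The out-ball is $\overrightarrow{\mathcal{B}}_r(x)=\{y : d(x,y)\le r\}$ and the in-ball is $\overleftarrow{\mathcal{B}}_r(x)=\{y : d(y,x)\le r\}$; for a set $S$ of vertices these denote the unions over $x\in S$. A path of length $n$ is a sequence $[x_0,\dots,x_n]$ of vertices with an edge from $x_i$ to $x_{i+1}$ for each $i$; it is a geodesic if $n=d(x_0,x_n)$. Paths $p,q$ are composable if the end of $p$ is the start of $q$ (then $p\circ q$ is their concatenation), and parallel if they have the same start and the same end. A directed geodesic triangle is an ordered triple $(p,q,r)$ of geodesics with $p,q$ composable and $p\circ q$ parallel to $r$. It is $\delta$-thin if (identifying a path with its vertex set) every vertex of $r$ lies in $\overrightarrow{\mathcal{B}}_\delta(p)\cup\overleftarrow{\mathcal{B}}_\delta(q)$, every vertex of $p$ lies in $\overrightarrow{\mathcal{B}}_\delta(r)\cup\overleftarrow{\mathcal{B}}_\delta(q)$, and every vertex of $q$ lies in $\overrightarrow{\mathcal{B}}_\delta(p)\cup\overleftarrow{\mathcal{B}}_\delta(r)$. A directed graph is strongly $\delta$-hyperbolic if all its directed geodesic triangles are $\delta$-thin. For a monoid $M$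 generated by a finite set $A$, the right Cayley graph has vertex set $M$ and an edge from $m$ to $n$ for each $a\in A$ with $ma=n$; $M$ is strongly $\delta$-hyperbolic with respect to $A$ if this graph is strongly $\delta$-hyperbolic. For a monoid presentation $\langle A\mid R\rangle$ and words $u,v$ equal in the monoid, the area $A(u,v)$ is the least number of applications of relations from $R$ needed to transform $u$ into $v$; the Dehn function is $n\mapsto\max\{A(u,v) : u,v\in A^*, u=v \text{ in the monoid}, |u|+|v|\le n\}$. Dehn functions are compared up to the equivalence $f\sim g$ where $f\prec g$ means $f(j)\le a g(aj)+aj$ for some constant $a$ and all $j$; Dehn functions of different finite presentations of the same monoid are equivalent. *)

theory Defs
  imports Complex_Main "HOL-Library.Extended_Nat"
begin

definition cayley_edge :: "'m::monoid_mult set \<Rightarrow> 'm \<Rightarrow> 'm \<Rightarrow> bool" where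
  "cayley_edge A m n \<longleftrightarrow> (\<exists>a\<in>A. m * a = n)"

definition is_path :: "'m::monoid_mult set \<Rightarrow> 'm list \<Rightarrow> bool" where
  "is_path A p \<longleftrightarrow> p \<noteq> [] \<and> (\<forall>i. Suc i < length p \<longrightarrow> cayley_edge A (p ! i) (p ! Suc i))"

definition plen :: "'a list \<Rightarrow> nat" where
  "plen p = length p - 1"

text \<open>Directed distance; infinity if there is no directed path.\<close>
definition cdist :: "'m::monoid_mult set \<Rightarrow> 'm \<Rightarrow> 'm \<Rightarrow> enat" where
  "cdist A u v = Inf {enat (plen p) | p. is_path A p \<and> hd p = u \<and> last p = v}"

definition geodesic :: "'m::monoid_mult set \<Rightarrow> 'm list \<Rightarrow> bool" where
  "geodesic A p \<longleftrightarrow> is_path A p \<and> enat (plen p) = cdist A (hd p) (last p)"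

definition dist_le :: "enat \<Rightarrow> real \<Rightarrow> bool" where
  "dist_le d r \<longleftrightarrow> (\<exists>n. d = enat n \<and> real n \<le> r)"

definition out_ball :: "'m::monoid_mult set \<Rightarrow> real \<Rightarrow> 'm set \<Rightarrow> 'm set" where
  "out_ball A r S = {y. \<exists>x\<in>S. dist_le (cdist A x y) r}"

definition in_ball :: "'m::monoid_mult set \<Rightarrow> real \<Rightarrow> 'm set \<Rightarrow> 'm set" where
  "in_ball A r S = {y. \<exists>x\<in>S. dist_le (cdist A y x) r}"

definition geodesic_triangle :: "'m::monoid_mult set \<Rightarrow> 'm list \<Rightarrow> 'm list \<Rightarrow> 'm list \<Rightarrow> bool" where
  "geodesic_triangle A p q r \<longleftrightarrow> geodesic A p \<and> geodesic A q \<and> geodesic A r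
     \<and> last p = hd q \<and> hd r = hd p \<and> last r = last q"

definition thin_triangle :: "'m::monoid_mult set \<Rightarrow> real \<Rightarrow> 'm list \<Rightarrow> 'm list \<Rightarrow> 'm list \<Rightarrow> bool" where
  "thin_triangle A \<delta> p q r \<longleftrightarrow>
      set r \<subseteq> out_ball A \<delta> (set p) \<union> in_ball A \<delta> (set q)
    \<and> set p \<subseteq> out_ball A \<delta> (set r) \<union> in_ball A \<delta> (set q)
    \<and> set q \<subseteq> out_ball A \<delta> (set p) \<union> in_ball A \<delta> (set r)"

definition strongly_hyperbolic :: "'m::monoid_mult set \<Rightarrow> real \<Rightarrow> bool" where
  "strongly_hyperbolic A \<delta> \<longleftrightarrow>
     (\<forall>p q r. geodesic_triangle A p q r \<longrightarrow> thin_triangle A \<delta> p q r)"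

definition generates :: "'m::monoid_mult set \<Rightarrow> bool" where
  "generates A \<longleftrightarrow> (\<forall>m. \<exists>w\<in>lists A. prod_list w = m)"

definition left_cancellative :: "'m::monoid_mult itself \<Rightarrow> bool" where
  "left_cancellative _ \<longleftrightarrow> (\<forall>a b c :: 'm. a * b = a * c \<longrightarrow> b = c)"

text \<open>Alphabet: a finite set of natural numbers; \<phi> sends letters to generators of M.\<close>
definition eval_word :: "(nat \<Rightarrow> 'm::monoid_mult) \<Rightarrow> nat list \<Rightarrow> 'm" where
  "eval_word \<phi> w = prod_list (map \<phi> w)"

definition rstep :: "(nat list \<times> nat list) set \<Rightarrow> (nat list \<times> nat list) set" where
  "rstep R = {(x @ l @ y, x @ r @ y) | x y l r. (l, r) \<in> R \<or> (r, l) \<in> R}"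

definition is_presentation ::
  "nat set \<Rightarrow> (nat list \<times> nat list) set \<Rightarrow> (nat \<Rightarrow> 'm::monoid_mult) \<Rightarrow> bool" where
  "is_presentation G R \<phi> \<longleftrightarrow> R \<subseteq> lists G \<times> lists G
     \<and> (\<forall>m. \<exists>w\<in>lists G. eval_word \<phi> w = m)
     \<and> (\<forall>u\<in>lists G. \<forall>v\<in>lists G. eval_word \<phi> u = eval_word \<phi> v \<longleftrightarrow> (u, v) \<in> (rstep R)\<^sup>*)"

definition finite_presentation ::
  "nat set \<Rightarrow> (nat list \<times> nat list) set \<Rightarrow> (nat \<Rightarrow> 'm::monoid_mult) \<Rightarrow> bool" where
  "finite_presentation G R \<phi> \<longleftrightarrow> finite G \<and> finite R \<and> is_presentation G R \<phi>"

definition area :: "(nat list \<times> nat list) set \<Rightarrow> nat list \<Rightarrow> nat list \<Rightarrow> nat" where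
  "area R u v = (LEAST n. (u, v) \<in> (rstep R) ^^ n)"

definition dehn :: "nat set \<Rightarrow> (nat list \<times> nat list) set \<Rightarrow> (nat \<Rightarrow> 'm::monoid_mult) \<Rightarrow> nat \<Rightarrow> nat" where
  "dehn G R \<phi> n = Max {area R u v | u v. u \<in> lists G \<and> v \<in> lists G
      \<and> eval_word \<phi> u = eval_word \<phi> v \<and> length u + length v \<le> n}"

text \<open>f \<prec> (j \<mapsto> j powr \<alpha>): f j \<le> a g(a j) + a j for some constant a.\<close>
definition dehn_le_power :: "(nat \<Rightarrow> nat) \<Rightarrow> real \<Rightarrow> bool" where
  "dehn_le_power f \<alpha> \<longleftrightarrow>
     (\<exists>a::real. a > 0 \<and> (\<forall>j. real (f j) \<le> a * (a * real j) powr \<alpha> + a * real j))"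

end

theory Submission
  imports Defs
begin

text \<open>
  Let D = \<lceil>\<delta>\<rceil> and call geodesic words g, h a bigon if g t = h (or s g = h) for a word t (or s)
  of length at most D + 1.  Thinness of the geodesic triangle spanned by a bigon, applied at the
  midpoint of h, or along the surplus part of g when g is much longer than h, rewrites g t into h
  through at most three bigons of at most 5/6 of the size plus linearly many relators of length
  O(D).  So bigons have area O(n^5), and reducing a word to a geodesic one letter at a time gives
  area O(n^6) for any two equal words; in particular the relators of length O(D) present the monoid.
  Translating between finite presentations preserves this bound, and 6 \<le> log_{4/3} 5 + 1.
\<close>

lemma take_in_lists [simp]: "w \<in> lists X \<Longrightarrow> take i w \<in> lists X"
  by (metis append_in_lists_conv append_take_drop_id)

lemma drop_in_lists [simp]: "w \<in> lists X \<Longrightarrow> drop i w \<in> lists X"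
  by (metis append_in_lists_conv append_take_drop_id)

lemma eval_word_Nil [simp]: "eval_word \<phi> [] = 1"
  and eval_word_Cons [simp]: "eval_word \<phi> (a # u) = \<phi> a * eval_word \<phi> u"
  and eval_word_append [simp]: "eval_word \<phi> (u @ v) = eval_word \<phi> u * eval_word \<phi> v"
  unfolding eval_word_def by auto

lemma eval_word_take_drop: "eval_word \<phi> (take i w) * eval_word \<phi> (drop i w) = eval_word \<phi> w"
  by (metis append_take_drop_id eval_word_append)

definition area_le :: "(nat list \<times> nat list) set \<Rightarrow> nat list \<Rightarrow> nat list \<Rightarrow> nat \<Rightarrow> bool" where
  "area_le R u v n \<longleftrightarrow> (\<exists>k\<le>n. (u, v) \<in> (rstep R) ^^ k)"

lemma area_le_refl: "area_le R u u n"
  unfolding area_le_def by (rule exI[of _ 0]) auto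

lemma area_le_mono: "area_le R u v n \<Longrightarrow> n \<le> m \<Longrightarrow> area_le R u v m"
  unfolding area_le_def by (meson order_trans)

lemma area_le_trans: "area_le R u v n \<Longrightarrow> area_le R v w m \<Longrightarrow> area_le R u w (n + m)"
proof -
  assume "area_le R u v n" "area_le R v w m"
  then obtain k1 k2 where "k1 \<le> n" "(u, v) \<in> rstep R ^^ k1" "k2 \<le> m" "(v, w) \<in> rstep R ^^ k2"
    unfolding area_le_def by blast
  then have "(u, w) \<in> rstep R ^^ (k1 + k2)" "k1 + k2 \<le> n + m"
    by (auto simp: relpow_add)
  then show ?thesis unfolding area_le_def by blast
qed

lemma rstep_sym: "(u, v) \<in> rstep R \<Longrightarrow> (v, u) \<in> rstep R"
  unfolding rstep_def by blast

lemma rstep_relpow_sym: "(u, v) \<in> rstep R ^^ k \<Longrightarrow> (v, u) \<in> rstep R ^^ k"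
proof (induction k arbitrary: v)
  case (Suc k)
  then obtain y where "(u, y) \<in> rstep R ^^ k" "(y, v) \<in> rstep R" by auto
  then show ?case using Suc.IH rstep_sym by (meson relpow_Suc_I2)
qed simp

lemma area_le_sym: "area_le R u v n \<Longrightarrow> area_le R v u n"
  unfolding area_le_def using rstep_relpow_sym by blast

lemma rstep_context: "(u, v) \<in> rstep R \<Longrightarrow> (x @ u @ y, x @ v @ y) \<in> rstep R"
proof -
  assume "(u, v) \<in> rstep R"
  then obtain a b l r where "u = a @ l @ b" "v = a @ r @ b" "(l, r) \<in> R \<or> (r, l) \<in> R"
    unfolding rstep_def by blast
  then show ?thesis unfolding rstep_def
    by (intro CollectI exI[of _ "x @ a"] exI[of _ "b @ y"] exI[of _ l] exI[of _ r]) auto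
qed

lemma rstep_relpow_context: "(u, v) \<in> rstep R ^^ k \<Longrightarrow> (x @ u @ y, x @ v @ y) \<in> rstep R ^^ k"
proof (induction k arbitrary: v)
  case (Suc k)
  then obtain z where "(u, z) \<in> rstep R ^^ k" "(z, v) \<in> rstep R" by auto
  then show ?case using Suc.IH rstep_context by (meson relpow_Suc_I)
qed simp

lemma area_le_context: "area_le R u v n \<Longrightarrow> area_le R (x @ u @ y) (x @ v @ y) n"
  unfolding area_le_def using rstep_relpow_context by blast

lemma area_le_prefix: "area_le R u v n \<Longrightarrow> area_le R (x @ u) (x @ v) n"
  using area_le_context[of R u v n x "[]"] by simp

lemma area_le_suffix: "area_le R u v n \<Longrightarrow> area_le R (u @ y) (v @ y) n"
  using area_le_context[of R u v n "[]" y] by simp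

lemma rel_in_rstep: "(u, v) \<in> R \<Longrightarrow> (u, v) \<in> rstep R"
  unfolding rstep_def by (intro CollectI exI[of _ "[]"] exI[of _ "[]"] exI[of _ u] exI[of _ v]) auto

lemma area_le_rel: "(u, v) \<in> R \<Longrightarrow> area_le R u v 1"
  unfolding area_le_def using rel_in_rstep by (intro exI[of _ 1]) auto

lemma area_le_imp_area_le: "area_le R u v n \<Longrightarrow> area R u v \<le> n"
  unfolding area_le_def area_def by (meson Least_le order_trans)

lemma rtrancl_imp_area_le: "(u, v) \<in> (rstep R)\<^sup>* \<Longrightarrow> \<exists>n. area_le R u v n"
  unfolding area_le_def by (meson order_refl rtrancl_power)

lemma area_le_imp_rtrancl: "area_le R u v n \<Longrightarrow> (u, v) \<in> (rstep R)\<^sup>*"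
  unfolding area_le_def using relpow_imp_rtrancl by blast

lemma finite_area_le_uniform:
  assumes "finite S" and "\<And>x. x \<in> S \<Longrightarrow> (l x, r x) \<in> (rstep R)\<^sup>*"
  obtains N where "\<And>x. x \<in> S \<Longrightarrow> area_le R (l x) (r x) N"
proof -
  have "\<exists>N. \<forall>x\<in>S. area_le R (l x) (r x) N"
    using assms
  proof (induction S rule: finite_induct)
    case (insert x S)
    then obtain N n where "\<forall>y\<in>S. area_le R (l y) (r y) N" "area_le R (l x) (r x) n"
      using rtrancl_imp_area_le by (metis insertCI)
    then have "\<forall>y\<in>insert x S. area_le R (l y) (r y) (N + n)"
      by (metis area_le_mono insert_iff le_add1 le_add2)
    then show ?case ..
  qed simp
  then show ?thesis using that by blast
qed

subsection \<open>Changing the presentation\<close>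

lemma rtrancl_rstep_eval_eq:
  assumes "\<And>l r. (l, r) \<in> R \<Longrightarrow> eval_word \<phi> l = eval_word \<phi> r"
  shows "(u, v) \<in> (rstep R)\<^sup>* \<Longrightarrow> eval_word \<phi> u = eval_word \<phi> v"
proof (induction rule: rtrancl_induct)
  case (step y z)
  then obtain x w l r where "y = x @ l @ w" "z = x @ r @ w" "(l, r) \<in> R \<or> (r, l) \<in> R"
    unfolding rstep_def by blast
  then show ?case using step assms by auto
qed simp

lemma presentation_rel_eval_eq:
  assumes "is_presentation G R \<phi>" "(l, r) \<in> R"
  shows "eval_word \<phi> l = eval_word \<phi> r"
  using assms rel_in_rstep unfolding is_presentation_def by blast

lemma presentation_words:
  assumes "is_presentation G R \<phi>"
  obtains \<sigma> where "\<And>b. \<sigma> b \<in> lists G" "\<And>b. eval_word \<phi> (\<sigma> b) = \<psi> b"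
proof -
  have "\<forall>b. \<exists>w. w \<in> lists G \<and> eval_word \<phi> w = \<psi> b"
    using assms unfolding is_presentation_def by blast
  then show ?thesis using that by metis
qed

lemma area_le_concat_map:
  assumes "\<And>b. b \<in> G \<Longrightarrow> area_le R [b] (f b) N" and "u \<in> lists G"
  shows "area_le R u (concat (map f u)) (N * length u)"
  using assms(2)
proof (induction u)
  case (Cons b u)
  have "b \<in> G" using Cons by simp
  then have "area_le R ([b] @ u) (f b @ u) N"
    using area_le_suffix[OF assms(1)] by blast
  moreover have "area_le R (f b @ u) (f b @ concat (map f u)) (N * length u)"
    using area_le_prefix Cons by auto
  ultimately show ?case using area_le_trans by fastforce
qed (simp add: area_le_refl)

lemma area_le_concat_map_relpow:
  assumes "\<And>l r. (l, r) \<in> R0 \<Longrightarrow> area_le R (concat (map f l)) (concat (map f r)) N"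
  shows "(x, y) \<in> rstep R0 ^^ k \<Longrightarrow> area_le R (concat (map f x)) (concat (map f y)) (N * k)"
proof (induction k arbitrary: y)
  case (Suc k)
  then obtain z where xz: "(x, z) \<in> rstep R0 ^^ k" and "(z, y) \<in> rstep R0" by auto
  then obtain a c l r where zy: "z = a @ l @ c" "y = a @ r @ c" "(l, r) \<in> R0 \<or> (r, l) \<in> R0"
    unfolding rstep_def by blast
  then have "area_le R (concat (map f l)) (concat (map f r)) N"
    using assms area_le_sym by blast
  then have "area_le R (concat (map f z)) (concat (map f y)) N"
    using area_le_context[of R _ _ N "concat (map f a)" "concat (map f c)"] zy by simp
  from area_le_trans[OF Suc.IH[OF xz] this] show ?case by (simp add: algebra_simps)
qed (simp add: area_le_refl)

lemma finite_presentations_translation: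
  fixes \<phi>0 \<phi> :: "nat \<Rightarrow> 'm::monoid_mult"
  assumes P0: "finite_presentation G0 R0 \<phi>0" and P: "finite_presentation G R \<phi>"
  obtains \<sigma> \<tau> L N where "\<And>u. concat (map \<sigma> u) \<in> lists G0"
    and "\<And>u. eval_word \<phi>0 (concat (map \<sigma> u)) = eval_word \<phi> u"
    and "\<And>u. u \<in> lists G \<Longrightarrow> length (concat (map \<sigma> u)) \<le> L * length u"
    and "\<And>u. u \<in> lists G \<Longrightarrow> area_le R u (concat (map \<tau> (concat (map \<sigma> u)))) (N * length u)"
    and "\<And>x y k. (x, y) \<in> rstep R0 ^^ k \<Longrightarrow> area_le R (concat (map \<tau> x)) (concat (map \<tau> y)) (N * k)"
proof -
  have pres0: "is_presentation G0 R0 \<phi>0" "finite R0" and pres: "is_presentation G R \<phi>" "finite G"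
    using P0 P unfolding finite_presentation_def by auto
  have eq: "(u, v) \<in> (rstep R)\<^sup>*" if "u \<in> lists G" "v \<in> lists G" "eval_word \<phi> u = eval_word \<phi> v" for u v
    using pres(1) that unfolding is_presentation_def by blast
  obtain \<sigma> where \<sigma>: "\<And>b. \<sigma> b \<in> lists G0" "\<And>b. eval_word \<phi>0 (\<sigma> b) = \<phi> b"
    using presentation_words[OF pres0(1)] by metis
  obtain \<tau> where \<tau>: "\<And>a. \<tau> a \<in> lists G" "\<And>a. eval_word \<phi> (\<tau> a) = \<phi>0 a"
    using presentation_words[OF pres(1)] by metis
  have \<tau>_eval: "eval_word \<phi> (concat (map \<tau> u)) = eval_word \<phi>0 u" for u
    by (induction u) (simp_all add: \<tau>)
  have \<tau>_lists: "concat (map \<tau> u) \<in> lists G" for u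
    by (induction u) (simp_all add: \<tau>)
  obtain L where L: "\<And>b. b \<in> G \<Longrightarrow> length (\<sigma> b) \<le> L"
    using pres(2) finite_nat_set_iff_bounded_le[of "(\<lambda>b. length (\<sigma> b)) ` G"] by auto
  have "([b], concat (map \<tau> (\<sigma> b))) \<in> (rstep R)\<^sup>*" if "b \<in> G" for b
    using eq[of "[b]"] that \<tau>_lists \<tau>_eval \<sigma> by simp
  then obtain N1 where N1: "\<And>b. b \<in> G \<Longrightarrow> area_le R [b] (concat (map \<tau> (\<sigma> b))) N1"
    using finite_area_le_uniform[OF pres(2), of "\<lambda>b. [b]" "\<lambda>b. concat (map \<tau> (\<sigma> b))" R] by blast
  have "(concat (map \<tau> (fst p)), concat (map \<tau> (snd p))) \<in> (rstep R)\<^sup>*" if "p \<in> R0" for p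
    using eq \<tau>_lists \<tau>_eval presentation_rel_eval_eq[OF pres0(1), of "fst p" "snd p"] that by simp
  then obtain N2 where N2: "\<And>l r. (l, r) \<in> R0 \<Longrightarrow> area_le R (concat (map \<tau> l)) (concat (map \<tau> r)) N2"
    using finite_area_le_uniform[OF pres0(2), of "\<lambda>p. concat (map \<tau> (fst p))" "\<lambda>p. concat (map \<tau> (snd p))" R]
    by fastforce
  show ?thesis
  proof (rule that[of \<sigma> L \<tau> "N1 + N2"])
    show "concat (map \<sigma> u) \<in> lists G0" "eval_word \<phi>0 (concat (map \<sigma> u)) = eval_word \<phi> u" for u
      by (induction u) (simp_all add: \<sigma>)
    show "length (concat (map \<sigma> u)) \<le> L * length u" if "u \<in> lists G" for u
      using that by (induction u) (auto intro: add_mono L)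
    have concat_\<sigma>\<tau>: "concat (map (\<lambda>b. concat (map \<tau> (\<sigma> b))) u) = concat (map \<tau> (concat (map \<sigma> u)))" for u
      by (induction u) simp_all
    show "area_le R u (concat (map \<tau> (concat (map \<sigma> u)))) ((N1 + N2) * length u)" if "u \<in> lists G" for u
    proof -
      have "area_le R u (concat (map \<tau> (concat (map \<sigma> u)))) (N1 * length u)"
        using area_le_concat_map[of G R "\<lambda>b. concat (map \<tau> (\<sigma> b))" N1 u] N1 that unfolding concat_\<sigma>\<tau> by blast
      then show ?thesis by (rule area_le_mono) (rule mult_le_mono1[OF le_add1])
    qed
    show "area_le R (concat (map \<tau> x)) (concat (map \<tau> y)) ((N1 + N2) * k)" if
        "(x, y) \<in> rstep R0 ^^ k" for x y k
      by (rule area_le_mono[OF area_le_concat_map_relpow]) (use N2 that in \<open>auto simp: add_mult_distrib\<close>)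
  qed
qed

lemma finite_presentation_area_transfer:
  fixes \<phi>0 \<phi> :: "nat \<Rightarrow> 'm::monoid_mult"
  assumes P0: "finite_presentation G0 R0 \<phi>0"
    and bound: "\<And>u v. u \<in> lists G0 \<Longrightarrow> v \<in> lists G0 \<Longrightarrow> eval_word \<phi>0 u = eval_word \<phi>0 v
        \<Longrightarrow> area_le R0 u v (B (length u + length v))"
    and "mono B"
    and P: "finite_presentation G R \<phi>"
  obtains c L where "\<And>u v. u \<in> lists G \<Longrightarrow> v \<in> lists G \<Longrightarrow> eval_word \<phi> u = eval_word \<phi> v
     \<Longrightarrow> area_le R u v (c * (length u + length v) + c * B (L * (length u + length v)))"
proof -
  obtain \<sigma> L \<tau> N where \<sigma>: "\<And>u. concat (map \<sigma> u) \<in> lists G0"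
      "\<And>u. eval_word \<phi>0 (concat (map \<sigma> u)) = eval_word \<phi> u"
      "\<And>u. u \<in> lists G \<Longrightarrow> length (concat (map \<sigma> u)) \<le> L * length u"
    and round_trip: "\<And>u. u \<in> lists G \<Longrightarrow> area_le R u (concat (map \<tau> (concat (map \<sigma> u)))) (N * length u)"
    and \<tau>: "\<And>x y k. (x, y) \<in> rstep R0 ^^ k \<Longrightarrow> area_le R (concat (map \<tau> x)) (concat (map \<tau> y)) (N * k)"
    by (rule finite_presentations_translation[OF P0 P]) blast
  show ?thesis
  proof (rule that[of N L])
    fix u v assume uv: "u \<in> lists G" "v \<in> lists G" "eval_word \<phi> u = eval_word \<phi> v"
    define n where "n = length u + length v"
    have "length (concat (map \<sigma> u)) + length (concat (map \<sigma> v)) \<le> L * n"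
      using \<sigma>(3) uv unfolding n_def by (simp add: add_mult_distrib2 add_mono)
    then have "area_le R0 (concat (map \<sigma> u)) (concat (map \<sigma> v)) (B (L * n))"
      using bound[OF \<sigma>(1) \<sigma>(1)] \<sigma>(2) uv(3) area_le_mono \<open>mono B\<close> by (metis monoD)
    then obtain k where k: "k \<le> B (L * n)" "(concat (map \<sigma> u), concat (map \<sigma> v)) \<in> rstep R0 ^^ k"
      unfolding area_le_def by blast
    have "area_le R (concat (map \<tau> (concat (map \<sigma> u)))) (concat (map \<tau> (concat (map \<sigma> v)))) (N * B (L * n))"
      using \<tau>[OF k(2)] by (rule area_le_mono) (simp add: k(1))
    then have "area_le R u v (N * length u + N * B (L * n) + N * length v)"
      by (rule area_le_trans[OF area_le_trans[OF round_trip[OF uv(1)]] area_le_sym[OF round_trip[OF uv(2)]]])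
    then show "area_le R u v (N * (length u + length v) + N * B (L * (length u + length v)))"
      by (rule area_le_mono) (simp add: n_def algebra_simps)
  qed
qed

lemma is_path_Cons_Cons: "is_path A (x # y # ps) \<longleftrightarrow> cayley_edge A x y \<and> is_path A (y # ps)"
  unfolding is_path_def
proof safe
  fix i assume "\<forall>i. Suc i < length (x # y # ps) \<longrightarrow> cayley_edge A ((x # y # ps) ! i) ((x # y # ps) ! Suc i)"
    "Suc i < length (y # ps)"
  then show "cayley_edge A ((y # ps) ! i) ((y # ps) ! Suc i)"
    by (metis Suc_less_eq length_Cons nth_Cons_Suc)
next
  fix i assume "cayley_edge A x y"
      "\<forall>i. Suc i < length (y # ps) \<longrightarrow> cayley_edge A ((y # ps) ! i) ((y # ps) ! Suc i)"
    "Suc i < length (x # y # ps)"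
  then show "cayley_edge A ((x # y # ps) ! i) ((x # y # ps) ! Suc i)"
    by (cases i) auto
qed force

lemma is_path_word:
  fixes A :: "'m::monoid_mult set"
  shows "is_path A p \<Longrightarrow> \<exists>as\<in>lists A. length as = plen p \<and> hd p * prod_list as = last p"
proof (induction p)
  case (Cons x ps)
  show ?case
  proof (cases ps)
    case Nil then show ?thesis by (simp add: plen_def)
  next
    case (Cons y qs)
    with Cons.prems have "cayley_edge A x y" and "is_path A ps" using is_path_Cons_Cons by auto
    then obtain a as where "a \<in> A" "x * a = y"
      and "as \<in> lists A" "length as = plen ps" "hd ps * prod_list as = last ps"
      using Cons.IH unfolding cayley_edge_def by blast
    then show ?thesis
      by (intro bexI[of _ "a # as"]) (use Cons in \<open>auto simp: plen_def mult.assoc\<close>)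
  qed
qed (simp add: is_path_def)

definition word_path :: "'m::monoid_mult \<Rightarrow> 'm list \<Rightarrow> 'm list" where
  "word_path x as = map (\<lambda>i. x * prod_list (take i as)) [0..<Suc (length as)]"

lemma word_path_simps:
  "hd (word_path x as) = x" "last (word_path x as) = x * prod_list as"
  "plen (word_path x as) = length as"
  "set (word_path x as) = {x * prod_list (take i as) | i. i \<le> length as}"
  unfolding word_path_def plen_def
  by (auto simp: hd_map last_map simp del: upt_Suc)

lemma is_path_word_path:
  assumes "as \<in> lists A" shows "is_path A (word_path x as)"
  unfolding is_path_def
proof safe
  show "word_path x as = [] \<Longrightarrow> False" unfolding word_path_def by simp
  fix i assume i: "Suc i < length (word_path x as)"
  then have "i < length as" unfolding word_path_def by simp
  moreover have "word_path x as ! i = x * prod_list (take i as)"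
    "word_path x as ! Suc i = x * prod_list (take (Suc i) as)"
    using i unfolding word_path_def by (auto simp del: upt_Suc)
  ultimately show "cayley_edge A (word_path x as ! i) (word_path x as ! Suc i)"
    unfolding cayley_edge_def using assms by (auto simp: take_Suc_conv_app_nth mult.assoc)
qed

lemma cdist_le_enat_iff:
  fixes A :: "'m::monoid_mult set"
  shows "cdist A x y \<le> enat n \<longleftrightarrow> (\<exists>as\<in>lists A. length as \<le> n \<and> x * prod_list as = y)"
proof
  assume le: "cdist A x y \<le> enat n"
  define S where "S = {enat (plen p) | p. is_path A p \<and> hd p = x \<and> last p = y}"
  have cd: "cdist A x y = Inf S" unfolding cdist_def S_def by simp
  then have "S \<noteq> {}" using le by (auto simp: Inf_enat_def)
  then have "Inf S \<in> S" by (simp add: Inf_enat_def) (metis LeastI ex_in_conv)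
  then obtain p where p: "is_path A p" "hd p = x" "last p = y" "cdist A x y = enat (plen p)"
    unfolding S_def cd by auto
  then obtain as where "as \<in> lists A" "length as = plen p" "x * prod_list as = y"
    using is_path_word by blast
  then show "\<exists>as\<in>lists A. length as \<le> n \<and> x * prod_list as = y"
    using p(4) le by (intro bexI[of _ as]) auto
next
  assume "\<exists>as\<in>lists A. length as \<le> n \<and> x * prod_list as = y"
  then obtain as where as: "as \<in> lists A" "length as \<le> n" "x * prod_list as = y" by blast
  have "cdist A x y \<le> enat (plen (word_path x as))"
    unfolding cdist_def using is_path_word_path[OF as(1)] as(3)
    by (intro Inf_lower CollectI exI[of _ "word_path x as"]) (auto simp: word_path_simps)
  then show "cdist A x y \<le> enat n" using as(2) word_path_simps(3) by (metis enat_ord_simps(1) order_trans)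
qed

lemma dist_le_imp_cdist_le: "dist_le d r \<Longrightarrow> d \<le> enat (nat \<lceil>r\<rceil>)"
  unfolding dist_le_def by (auto simp: le_nat_iff) (metis ceiling_mono ceiling_of_nat)

lemma geodesic_word_path:
  fixes A :: "'m::monoid_mult set"
  assumes "as \<in> lists A"
    and "\<And>bs. bs \<in> lists A \<Longrightarrow> x * prod_list bs = x * prod_list as \<Longrightarrow> length as \<le> length bs"
  shows "geodesic A (word_path x as)"
proof -
  have "cdist A x (x * prod_list as) \<le> enat (length as)"
    using cdist_le_enat_iff assms(1) by blast
  moreover have "\<not> cdist A x (x * prod_list as) \<le> enat n" if "n < length as" for n
    using cdist_le_enat_iff assms that by (metis leD order_le_less_trans)
  ultimately have "cdist A x (x * prod_list as) = enat (length as)"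
    by (cases "cdist A x (x * prod_list as)") (simp_all, metis le_neq_implies_less order_refl)
  then show ?thesis
    unfolding geodesic_def using is_path_word_path[OF assms(1)] by (simp add: word_path_simps)
qed

subsection \<open>Polynomial bounds\<close>

definition bigon_area :: "nat \<Rightarrow> nat" where
  "bigon_area m = 30 * (m + 1) ^ 5"

lemma mono_bigon_area: "mono bigon_area"
  unfolding bigon_area_def by (intro monoI) (simp add: power_mono)

lemma bigon_area_ge_1: "1 \<le> bigon_area m"
  unfolding bigon_area_def by simp

text \<open>
  Three subproblems of size at most 5/6 (m+1) each and of total size at most 5/3 (m+1) cost at
  most (5/6)^4 * 5/3 < 5/6 of the bound, which leaves room for a linear overhead.
\<close>
lemma bigon_area_split:
  fixes p1 p2 p3 e m :: nat
  assumes "6 * (p1 + 1) \<le> 5 * (m + 1)" "6 * (p2 + 1) \<le> 5 * (m + 1)" "6 * (p3 + 1) \<le> 5 * (m + 1)"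
    and "3 * (p1 + p2 + p3 + 3) \<le> 5 * (m + 1)" and "e \<le> m + 5"
  shows "bigon_area p1 + bigon_area p2 + bigon_area p3 + e \<le> bigon_area m"
proof -
  define n where "n = 5 * (m + 1)"
  have pow5: "x ^ 5 \<le> n ^ 4 * x" if "x \<le> n" for x :: nat
  proof -
    have "x ^ 4 * x \<le> n ^ 4 * x" using power_mono[OF that, of 4] by simp
    then show ?thesis by (simp add: power_Suc2[symmetric] del: power_Suc)
  qed
  have "(6 * (p1 + 1)) ^ 5 + (6 * (p2 + 1)) ^ 5 + (6 * (p3 + 1)) ^ 5
      \<le> n ^ 4 * (6 * (p1 + 1)) + n ^ 4 * (6 * (p2 + 1)) + n ^ 4 * (6 * (p3 + 1))"
    using assms(1-3) unfolding n_def[symmetric] by (intro add_mono pow5)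
  also have "\<dots> = n ^ 4 * (2 * (3 * (p1 + p2 + p3 + 3)))"
    by (simp add: algebra_simps)
  also have "\<dots> \<le> n ^ 4 * (2 * n)"
    using assms(4) n_def by simp
  also have "\<dots> = 2 * n ^ 5"
    by (simp add: eval_nat_numeral algebra_simps)
  also have "\<dots> = 6250 * (m + 1) ^ 5"
    unfolding n_def by (simp only: power_mult_distrib) simp
  finally have sum: "(6 * (p1 + 1)) ^ 5 + (6 * (p2 + 1)) ^ 5 + (6 * (p3 + 1)) ^ 5 \<le> 6250 * (m + 1) ^ 5" .
  have "(6 * (p + 1)) ^ 5 = 7776 * (p + 1) ^ 5" for p :: nat
    by (simp only: power_mult_distrib) simp
  moreover have "e \<le> 5 * (m + 1) ^ 5"
    using assms(5) self_le_power[of "m + 1" 5] by simp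
  ultimately show ?thesis
    using sum unfolding bigon_area_def by simp
qed

definition word_area_bound :: "nat \<Rightarrow> nat" where
  "word_area_bound n = (n + 1) * bigon_area (2 * n)"

lemma mono_word_area_bound: "mono word_area_bound"
  unfolding word_area_bound_def using mono_bigon_area
  by (intro monoI mult_le_mono) (auto simp: monoD)

lemma word_area_bound_le:
  assumes "1 \<le> n" shows "word_area_bound (L * n) \<le> 30 * (2 * L + 1) ^ 6 * n ^ 6"
proof -
  have "L * n + 1 \<le> (2 * L + 1) * n" "2 * (L * n) + 1 \<le> (2 * L + 1) * n"
    using assms by (simp_all add: algebra_simps)
  then have "(L * n + 1) * (2 * (L * n) + 1) ^ 5 \<le> ((2 * L + 1) * n) * ((2 * L + 1) * n) ^ 5"
    by (intro mult_le_mono power_mono) auto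
  also have "\<dots> = ((2 * L + 1) * n) ^ 6"
    by (simp only: power_Suc[symmetric]) simp
  also have "\<dots> = (2 * L + 1) ^ 6 * n ^ 6"
    by (rule power_mult_distrib)
  finally show ?thesis unfolding word_area_bound_def bigon_area_def by simp
qed

locale hyperbolic_numbering =
  fixes A :: "'m::monoid_mult set" and \<delta> :: real and N :: nat and \<phi> :: "nat \<Rightarrow> 'm"
  assumes left_cancel: "\<And>a b c :: 'm. a * b = a * c \<Longrightarrow> b = c"
    and generates: "generates A"
    and numbering: "\<phi> ` {..<N} = A"
    and hyperbolic: "strongly_hyperbolic A \<delta>"
begin

abbreviation alphabet :: "nat set" where
  "alphabet \<equiv> {..<N}"

abbreviation val :: "nat list \<Rightarrow> 'm" where
  "val \<equiv> eval_word \<phi>"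

definition D :: nat where
  "D = nat \<lceil>\<delta>\<rceil>"

definition geodesic_word :: "nat list \<Rightarrow> bool" where
  "geodesic_word w \<longleftrightarrow> w \<in> lists alphabet \<and> (\<forall>u\<in>lists alphabet. val u = val w \<longrightarrow> length w \<le> length u)"

definition reaches :: "'m \<Rightarrow> 'm \<Rightarrow> bool" where
  "reaches x y \<longleftrightarrow> (\<exists>w\<in>lists alphabet. length w \<le> D \<and> x * val w = y)"

lemma val_take_drop: "val (take i w) * val (drop i w) = val w"
  by (rule eval_word_take_drop)

lemma word_of_generators:
  "as \<in> lists A \<Longrightarrow> \<exists>w\<in>lists alphabet. length w = length as \<and> val w = prod_list as"
proof (induction as)
  case (Cons a as)
  then obtain w where "w \<in> lists alphabet" "length w = length as" "val w = prod_list as" by auto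
  moreover obtain i where "i < N" "\<phi> i = a" using Cons.prems numbering by auto
  ultimately show ?case by (intro bexI[of _ "i # w"]) auto
qed simp

lemma word_exists: "\<exists>w\<in>lists alphabet. val w = x"
  using generates word_of_generators unfolding generates_def by metis

lemma geodesic_word_shorten:
  assumes "u \<in> lists alphabet"
  obtains w where "geodesic_word w" "val w = val u" "length w \<le> length u"
proof -
  define P where "P n \<longleftrightarrow> (\<exists>w\<in>lists alphabet. length w = n \<and> val w = val u)" for n
  have Pu: "P (length u)" using assms unfolding P_def by blast
  then have "P (LEAST n. P n)" by (rule LeastI)
  then obtain w where w: "w \<in> lists alphabet" "length w = (LEAST n. P n)" "val w = val u"
    unfolding P_def by blast
  have "geodesic_word w" unfolding geodesic_word_def
  proof (intro conjI ballI impI)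
    fix v assume "v \<in> lists alphabet" "val v = val w"
    then have "P (length v)" unfolding P_def using w by auto
    then show "length w \<le> length v" using w(2) by (simp add: Least_le)
  qed (use w in auto)
  moreover have "length w \<le> length u" using w(2) Pu by (simp add: Least_le)
  ultimately show ?thesis using that w(3) by blast
qed

lemma geodesic_word_exists: obtains w where "geodesic_word w" "val w = x"
  using word_exists geodesic_word_shorten by metis

lemma geodesic_word_lists: "geodesic_word w \<Longrightarrow> w \<in> lists alphabet"
  unfolding geodesic_word_def by blast

lemma geodesic_word_le: "geodesic_word w \<Longrightarrow> u \<in> lists alphabet \<Longrightarrow> val u = val w \<Longrightarrow> length w \<le> length u"
  unfolding geodesic_word_def by blast

lemma geodesic_word_appendD:
  assumes "geodesic_word (u @ v)" shows "geodesic_word u" "geodesic_word v"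
proof -
  have uv: "u \<in> lists alphabet" "v \<in> lists alphabet"
    using geodesic_word_lists[OF assms] by auto
  show "geodesic_word u" unfolding geodesic_word_def
  proof (intro conjI ballI impI)
    fix u' assume "u' \<in> lists alphabet" "val u' = val u"
    then show "length u \<le> length u'" using geodesic_word_le[OF assms, of "u' @ v"] uv by auto
  qed (use uv in auto)
  show "geodesic_word v" unfolding geodesic_word_def
  proof (intro conjI ballI impI)
    fix v' assume "v' \<in> lists alphabet" "val v' = val v"
    then show "length v \<le> length v'" using geodesic_word_le[OF assms, of "u @ v'"] uv by auto
  qed (use uv in auto)
qed

lemma geodesic_word_take: "geodesic_word w \<Longrightarrow> geodesic_word (take i w)"
  using geodesic_word_appendD(1)[of "take i w" "drop i w"] by simp

lemma geodesic_word_drop: "geodesic_word w \<Longrightarrow> geodesic_word (drop i w)"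
  using geodesic_word_appendD(2)[of "take i w" "drop i w"] by simp

lemma dist_le_imp_reaches: "dist_le (cdist A x y) \<delta> \<Longrightarrow> reaches x y"
proof -
  assume "dist_le (cdist A x y) \<delta>"
  then have "cdist A x y \<le> enat D" unfolding D_def by (rule dist_le_imp_cdist_le)
  then obtain as where "as \<in> lists A" "length as \<le> D" "x * prod_list as = y"
    using cdist_le_enat_iff by blast
  then show "reaches x y" unfolding reaches_def using word_of_generators by metis
qed

lemma geodesic_word_imp_geodesic:
  assumes "geodesic_word p" shows "geodesic A (word_path x (map \<phi> p))"
proof (rule geodesic_word_path)
  show "map \<phi> p \<in> lists A" using numbering geodesic_word_lists[OF assms] by auto
  fix bs assume bs: "bs \<in> lists A" "x * prod_list bs = x * prod_list (map \<phi> p)"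
  then have "prod_list bs = val p" using left_cancel unfolding eval_word_def by metis
  then obtain w where "w \<in> lists alphabet" "length w = length bs" "val w = val p"
    using word_of_generators[OF bs(1)] by metis
  then show "length (map \<phi> p) \<le> length bs" using geodesic_word_le[OF assms] by fastforce
qed

lemma set_word_path_map: "set (word_path x (map \<phi> p)) = {x * val (take i p) | i. i \<le> length p}"
  by (simp add: word_path_simps take_map eval_word_def)

text \<open>The vertices of the path spelled by a word are the values of its prefixes.\<close>
lemma thin_triangle_words:
  assumes "geodesic_word p" "geodesic_word q" "geodesic_word r" "val p * val q = val r"
  shows "\<And>j. j \<le> length r \<Longrightarrow> (\<exists>i\<le>length p. reaches (val (take i p)) (val (take j r)))
              \<or> (\<exists>k\<le>length q. reaches (val (take j r)) (val p * val (take k q)))"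
    and "\<And>i. i \<le> length p \<Longrightarrow> (\<exists>j\<le>length r. reaches (val (take j r)) (val (take i p)))
              \<or> (\<exists>k\<le>length q. reaches (val (take i p)) (val p * val (take k q)))"
    and "\<And>k. k \<le> length q \<Longrightarrow> (\<exists>i\<le>length p. reaches (val (take i p)) (val p * val (take k q)))
              \<or> (\<exists>j\<le>length r. reaches (val p * val (take k q)) (val (take j r)))"
proof -
  define P Q R where "P = word_path 1 (map \<phi> p)" and "Q = word_path (val p) (map \<phi> q)"
    and "R = word_path 1 (map \<phi> r)"
  have "geodesic_triangle A P Q R" unfolding geodesic_triangle_def P_def Q_def R_def
    using geodesic_word_imp_geodesic assms by (simp add: word_path_simps eval_word_def)
  then have thin: "thin_triangle A \<delta> P Q R"
    using hyperbolic unfolding strongly_hyperbolic_def by blast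
  have sP: "set P = {val (take i p) | i. i \<le> length p}"
    and sQ: "set Q = {val p * val (take k q) | k. k \<le> length q}"
    and sR: "set R = {val (take j r) | j. j \<le> length r}"
    unfolding P_def Q_def R_def set_word_path_map by simp_all
  show "(\<exists>i\<le>length p. reaches (val (take i p)) (val (take j r)))
      \<or> (\<exists>k\<le>length q. reaches (val (take j r)) (val p * val (take k q)))" if "j \<le> length r" for j
  proof -
    have "val (take j r) \<in> out_ball A \<delta> (set P) \<union> in_ball A \<delta> (set Q)"
      using thin that unfolding thin_triangle_def sR by blast
    then show ?thesis unfolding out_ball_def in_ball_def sP sQ using dist_le_imp_reaches by blast
  qed
  show "(\<exists>j\<le>length r. reaches (val (take j r)) (val (take i p)))
      \<or> (\<exists>k\<le>length q. reaches (val (take i p)) (val p * val (take k q)))" if "i \<le> length p" for i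
  proof -
    have "val (take i p) \<in> out_ball A \<delta> (set R) \<union> in_ball A \<delta> (set Q)"
      using thin that unfolding thin_triangle_def sP by blast
    then show ?thesis unfolding out_ball_def in_ball_def sR sQ using dist_le_imp_reaches by blast
  qed
  show "(\<exists>i\<le>length p. reaches (val (take i p)) (val p * val (take k q)))
      \<or> (\<exists>j\<le>length r. reaches (val p * val (take k q)) (val (take j r)))" if "k \<le> length q" for k
  proof -
    have "val p * val (take k q) \<in> out_ball A \<delta> (set P) \<union> in_ball A \<delta> (set R)"
      using thin that unfolding thin_triangle_def sQ by blast
    then show ?thesis unfolding out_ball_def in_ball_def sP sR using dist_le_imp_reaches by blast
  qed
qed

end

subsection \<open>Bigons\<close>

context hyperbolic_numbering
begin

text \<open>The length bound covers the bigons of size below 200 D + 200, which are handled directly.\<close>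
definition relators :: "(nat list \<times> nat list) set" where
  "relators = {(u, v). u \<in> lists alphabet \<and> v \<in> lists alphabet
     \<and> length u + length v \<le> 210 * D + 220 \<and> val u = val v}"

lemma area_le_relators_1:
  "u \<in> lists alphabet \<Longrightarrow> v \<in> lists alphabet \<Longrightarrow> length u + length v \<le> 210 * D + 220 \<Longrightarrow> val u = val v
    \<Longrightarrow> area_le relators u v 1"
  by (rule area_le_rel) (simp add: relators_def)

definition right_bigon :: "nat list \<Rightarrow> nat list \<Rightarrow> nat list \<Rightarrow> bool" where
  "right_bigon g t h \<longleftrightarrow> geodesic_word g \<and> geodesic_word h \<and> t \<in> lists alphabet \<and> length t \<le> D + 1
     \<and> val g * val t = val h"

definition left_bigon :: "nat list \<Rightarrow> nat list \<Rightarrow> nat list \<Rightarrow> bool" where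
  "left_bigon s g h \<longleftrightarrow> geodesic_word g \<and> geodesic_word h \<and> s \<in> lists alphabet \<and> length s \<le> D + 1
     \<and> val s * val g = val h"

definition bigons_bounded_below :: "nat \<Rightarrow> bool" where
  "bigons_bounded_below m \<longleftrightarrow>
     (\<forall>g t h. right_bigon g t h \<longrightarrow> length g + length h < m
        \<longrightarrow> area_le relators (g @ t) h (bigon_area (length g + length h)))
   \<and> (\<forall>s g h. left_bigon s g h \<longrightarrow> length g + length h < m
        \<longrightarrow> area_le relators (s @ g) h (bigon_area (length g + length h)))"

lemma bigons_bounded_belowD:
  assumes "bigons_bounded_below m"
  shows "right_bigon g t h \<Longrightarrow> length g + length h < m
      \<Longrightarrow> area_le relators (g @ t) h (bigon_area (length g + length h))"
    and "left_bigon s g h \<Longrightarrow> length g + length h < m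
      \<Longrightarrow> area_le relators (s @ g) h (bigon_area (length g + length h))"
  using assms unfolding bigons_bounded_below_def by blast+

lemma bigon_area_base:
  assumes "length g + length h < 200 * D + 200"
  shows "right_bigon g t h \<Longrightarrow> area_le relators (g @ t) h (bigon_area (length g + length h))"
    and "left_bigon s g h \<Longrightarrow> area_le relators (s @ g) h (bigon_area (length g + length h))"
proof -
  show "area_le relators (g @ t) h (bigon_area (length g + length h))" if "right_bigon g t h"
  proof -
    have "area_le relators (g @ t) h 1"
      using that assms geodesic_word_lists unfolding right_bigon_def by (intro area_le_relators_1) auto
    then show ?thesis using area_le_mono bigon_area_ge_1 by blast
  qed
  show "area_le relators (s @ g) h (bigon_area (length g + length h))" if "left_bigon s g h"
  proof -
    have "area_le relators (s @ g) h 1"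
      using that assms geodesic_word_lists unfolding left_bigon_def by (intro area_le_relators_1) auto
    then show ?thesis using area_le_mono bigon_area_ge_1 by blast
  qed
qed

lemma right_bigon_length_le: "right_bigon g t h \<Longrightarrow> length h \<le> length g + (D + 1)"
  using geodesic_word_le[of h "g @ t"] geodesic_word_lists unfolding right_bigon_def by fastforce

lemma left_bigon_length_le: "left_bigon s g h \<Longrightarrow> length h \<le> D + 1 + length g"
  using geodesic_word_le[of h "s @ g"] geodesic_word_lists unfolding left_bigon_def by fastforce

lemma right_bigon_midpoint:
  assumes V: "right_bigon g t h" and bal: "2 * length g \<le> 3 * length h"
    and big: "200 * D + 200 \<le> length g + length h"
  obtains i w where "i \<le> length g" "w \<in> lists alphabet" "length w \<le> D"
    "val (take i g) * val w = val (take (length h div 2) h)"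
proof -
  define j where "j = length h div 2"
  have gg: "geodesic_word g" and gh: "geodesic_word h" and t: "t \<in> lists alphabet" "length t \<le> D + 1"
    and e: "val g * val t = val h"
    using V unfolding right_bigon_def by auto
  obtain t' where t': "geodesic_word t'" "val t' = val t" "length t' \<le> length t"
    using geodesic_word_shorten[OF t(1)] by blast
  have e': "val g * val t' = val h" using e t' by simp
  have "j \<le> length h" unfolding j_def by simp
  from thin_triangle_words(1)[OF gg t'(1) gh e' this]
  consider (near_g) i where "i \<le> length g" "reaches (val (take i g)) (val (take j h))"
    | (near_t) k where "k \<le> length t'" "reaches (val (take j h)) (val g * val (take k t'))"
    by blast
  then show ?thesis
  proof cases
    case near_g then show ?thesis using that unfolding reaches_def j_def by blast
  next
    case near_t
    then obtain w where w: "w \<in> lists alphabet" "length w \<le> D"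
        "val (take j h) * val w = val g * val (take k t')"
      unfolding reaches_def by blast
    have "val (take j h @ w @ drop k t') = val h"
      using w(3) e' val_take_drop[of k t'] by (simp add: mult.assoc[symmetric]) (metis mult.assoc)
    then have "length h \<le> length (take j h @ w @ drop k t')"
      using geodesic_word_le[OF gh, of "take j h @ w @ drop k t'"] geodesic_word_lists[OF gh]
        geodesic_word_lists[OF t'(1)] w(1) by simp
    then have "length h \<le> j + D + (D + 1)" using w(2) t'(3) t(2) by simp
    then show ?thesis using bal big unfolding j_def by linarith
  qed
qed

lemma right_bigon_split:
  assumes V: "right_bigon g t h" and i: "i \<le> length g" and j: "j \<le> length h"
    and w: "w \<in> lists alphabet" "length w \<le> D" "val (take i g) * val w = val (take j h)"
  obtains k where "right_bigon (take i g) w (take j h)" "right_bigon (drop i g) t k"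
    "left_bigon w (drop j h) k" "j \<le> i + D" "length k \<le> D + (length h - j)"
proof -
  have gg: "geodesic_word g" and gh: "geodesic_word h" and tG: "t \<in> lists alphabet"
    and tC: "length t \<le> D + 1" and e: "val g * val t = val h"
    using V unfolding right_bigon_def by auto
  have "j \<le> length (take i g @ w)"
    using geodesic_word_le[OF geodesic_word_take[OF gh, of j], of "take i g @ w"]
      geodesic_word_lists[OF gg] w j
    by simp
  then have ji: "j \<le> i + D" using w(2) i by simp
  obtain k where k: "geodesic_word k" "val k = val (drop i g @ t)" using geodesic_word_exists by metis
  have ek: "val w * val (drop j h) = val k"
  proof (rule left_cancel[of "val (take i g)"])
    have "val (take i g) * (val w * val (drop j h)) = val h"
      using w(3) val_take_drop[of j h] by (simp add: mult.assoc[symmetric])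
    also have "\<dots> = val (take i g) * val k"
      using k(2) e val_take_drop[of i g] by (simp add: mult.assoc) (metis mult.assoc)
    finally show "val (take i g) * (val w * val (drop j h)) = val (take i g) * val k" .
  qed
  have "length k \<le> D + (length h - j)"
    using geodesic_word_le[OF k(1), of "w @ drop j h"] ek w geodesic_word_lists[OF gh] by simp
  moreover have "right_bigon (take i g) w (take j h)" "right_bigon (drop i g) t k" "left_bigon w (drop j h) k"
    unfolding right_bigon_def left_bigon_def using geodesic_word_take geodesic_word_drop gg gh k w tG tC ek
    by auto
  ultimately show ?thesis using that ji by blast
qed

lemma right_bigon_balanced:
  assumes IH: "bigons_bounded_below m" and V: "right_bigon g t h"
    and m: "m = length g + length h" "200 * D + 200 \<le> m" and bal: "2 * length g \<le> 3 * length h"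
  shows "area_le relators (g @ t) h (bigon_area m)"
proof -
  define G H j where "G = length g" and "H = length h" and "j = length h div 2"
  have HGC: "H \<le> G + (D + 1)" using right_bigon_length_le[OF V] unfolding G_def H_def .
  have jH: "2 * j \<le> H" "H \<le> 2 * j + 1" unfolding j_def H_def by auto
  obtain i w where i: "i \<le> G" and w: "w \<in> lists alphabet" "length w \<le> D"
      "val (take i g) * val w = val (take j h)"
    using right_bigon_midpoint[OF V bal] m unfolding G_def j_def by metis
  have ig: "i \<le> length g" and jh: "j \<le> length h" using i jH unfolding G_def H_def by auto
  obtain k where VA: "right_bigon (take i g) w (take j h)" and VB: "right_bigon (drop i g) t k"
    and WB: "left_bigon w (drop j h) k" and ji: "j \<le> i + D" and kl: "length k \<le> D + (H - j)"
    using right_bigon_split[OF V ig jh w] unfolding H_def by blast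
  have li: "length (take i g) = i" "length (drop i g) = G - i"
    and lj: "length (take j h) = j" "length (drop j h) = H - j"
    using i jH unfolding G_def H_def by auto
  have "area_le relators (take i g @ w) (take j h) (bigon_area (i + j))"
    using bigons_bounded_belowD(1)[OF IH VA] li lj m jH i bal unfolding G_def H_def by (simp; linarith)
  moreover have "area_le relators (drop i g @ t) k (bigon_area (G - i + length k))"
    using bigons_bounded_belowD(1)[OF IH VB] li m jH i bal ji kl unfolding G_def H_def by (simp; linarith)
  moreover have "area_le relators (w @ drop j h) k (bigon_area (H - j + length k))"
    using bigons_bounded_belowD(2)[OF IH WB] lj m jH i bal ji kl HGC unfolding G_def H_def by (simp; linarith)
  ultimately have
    "area_le relators (take i g @ (drop i g @ t)) (take i g @ k) (bigon_area (G - i + length k))"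
    "area_le relators (take i g @ k) (take i g @ (w @ drop j h)) (bigon_area (H - j + length k))"
    "area_le relators ((take i g @ w) @ drop j h) (take j h @ drop j h) (bigon_area (i + j))"
    using area_le_prefix area_le_suffix area_le_sym by blast+
  then have "area_le relators (g @ t) h
      (bigon_area (G - i + length k) + bigon_area (H - j + length k) + bigon_area (i + j))"
    by (metis (no_types, lifting) append.assoc append_take_drop_id area_le_trans)
  moreover have "bigon_area (i + j) + bigon_area (G - i + length k) + bigon_area (H - j + length k) + 0
      \<le> bigon_area m"
    by (rule bigon_area_split)
      (use m jH i bal ji kl HGC G_def H_def in \<open>(simp only: distrib_left) | linarith\<close>)+
  ultimately show ?thesis using area_le_mono by (simp add: add.commute add.left_commute)
qed

lemma right_bigon_tail_fellow:
  assumes V: "right_bigon g t h" and t: "geodesic_word t" and i: "length h + D + 1 \<le> i" "i \<le> length g"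
  obtains k w where "k \<le> length t" "w \<in> lists alphabet" "length w \<le> D"
    "val (take i g) * val w = val g * val (take k t)"
proof -
  have gg: "geodesic_word g" and gh: "geodesic_word h" and e: "val g * val t = val h"
    using V unfolding right_bigon_def by auto
  from thin_triangle_words(2)[OF gg t gh e i(2)]
  consider (near_h) j where "j \<le> length h" "reaches (val (take j h)) (val (take i g))"
    | (near_t) k where "k \<le> length t" "reaches (val (take i g)) (val g * val (take k t))"
    by blast
  then show ?thesis
  proof cases
    case near_h
    then obtain w where w: "w \<in> lists alphabet" "length w \<le> D" "val (take j h) * val w = val (take i g)"
      unfolding reaches_def by blast
    then have "length (take i g) \<le> length (take j h @ w)"
      using geodesic_word_le[OF geodesic_word_take[OF gg, of i], of "take j h @ w"] geodesic_word_lists[OF gh]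
      by simp
    then show ?thesis using w(2) i near_h(1) by simp
  next
    case near_t then show ?thesis using that unfolding reaches_def by blast
  qed
qed

text \<open>Each step trades one letter of g and a short word for a short word, which is a relator.\<close>
lemma area_le_tail_chain:
  assumes g: "g \<in> lists alphabet" and t: "t \<in> lists alphabet" "length t \<le> D + 1"
    and fellow: "\<And>i. i0 \<le> i \<Longrightarrow> i \<le> length g
      \<Longrightarrow> \<exists>W\<in>lists alphabet. length W \<le> 2 * D + 1 \<and> val (take i g) * val W = val g * val t"
  shows "i0 \<le> i \<Longrightarrow> i \<le> length g \<Longrightarrow> W \<in> lists alphabet \<Longrightarrow> length W \<le> 2 * D + 1
    \<Longrightarrow> val (take i g) * val W = val g * val t \<Longrightarrow> area_le relators (drop i g @ t) W (length g - i + 1)"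
proof (induction "length g - i" arbitrary: i W)
  case 0
  then have i: "i = length g" by simp
  then have "val g * val W = val g * val t" using 0 by simp
  then have "val W = val t" by (rule left_cancel)
  then have "area_le relators t W 1" using t 0 by (intro area_le_relators_1) auto
  then show ?case using i by simp
next
  case (Suc n)
  then have il: "i < length g" by simp
  obtain W' where W': "W' \<in> lists alphabet" "length W' \<le> 2 * D + 1"
      "val (take (Suc i) g) * val W' = val g * val t"
    using fellow[of "Suc i"] Suc.prems il by auto
  have IH: "area_le relators (drop (Suc i) g @ t) W' (length g - Suc i + 1)"
    using Suc.hyps(1)[of "Suc i" W'] Suc.hyps(2) Suc.prems W' il by simp
  have d: "drop i g = [g ! i] @ drop (Suc i) g" using il by (simp add: Cons_nth_drop_Suc)
  have gi: "g ! i \<in> alphabet" using g il by (meson in_lists_conv_set nth_mem)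
  have "val (take i g) * val ([g ! i] @ W') = val (take i g) * val W"
    using W'(3) Suc.prems(5) il by (simp add: take_Suc_conv_app_nth mult.assoc)
  then have "val ([g ! i] @ W') = val W" by (rule left_cancel)
  then have "area_le relators ([g ! i] @ W') W 1"
    using gi W' Suc.prems by (intro area_le_relators_1) auto
  moreover have "area_le relators (drop i g @ t) ([g ! i] @ W') (length g - Suc i + 1)"
    unfolding d using area_le_prefix[OF IH, of "[g ! i]"] by simp
  ultimately show ?case using area_le_trans il by (fastforce simp: Suc_diff_Suc)
qed

lemma right_bigon_tail_area_le:
  assumes V: "right_bigon g t h" and i0: "length h + D + 1 \<le> i0" "i0 \<le> length g"
  obtains w u where "w \<in> lists alphabet" "length w \<le> D" "u \<in> lists alphabet" "length u \<le> D + 1"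
    "val (take i0 g) * val w * val u = val h"
    "area_le relators (drop i0 g @ t) (w @ u) (length g - i0 + 1)"
proof -
  have gg: "geodesic_word g" and tG: "t \<in> lists alphabet" and tC: "length t \<le> D + 1"
    and e: "val g * val t = val h"
    using V unfolding right_bigon_def by auto
  obtain t' where t': "geodesic_word t'" "val t' = val t" "length t' \<le> length t"
    using geodesic_word_shorten[OF tG] by blast
  have V': "right_bigon g t' h" and t'G: "t' \<in> lists alphabet"
    using V t' tC geodesic_word_lists unfolding right_bigon_def by auto
  have fellow: "\<exists>W\<in>lists alphabet. length W \<le> 2 * D + 1 \<and> val (take i g) * val W = val g * val t"
    if i: "i0 \<le> i" "i \<le> length g" for i
  proof -
    have "length h + D + 1 \<le> i" using i(1) i0(1) by linarith
    then obtain k w where "k \<le> length t'" "w \<in> lists alphabet" "length w \<le> D"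
      "val (take i g) * val w = val g * val (take k t')"
      using right_bigon_tail_fellow[OF V' t'(1) _ i(2)] by blast
    moreover from this have "val (take i g) * val (w @ drop k t') = val g * val t"
      using val_take_drop[of k t'] t'(2) by (simp add: mult.assoc[symmetric]) (metis mult.assoc)
    ultimately show ?thesis using t' tC t'G by (intro bexI[of _ "w @ drop k t'"]) auto
  qed
  obtain k w where kw: "k \<le> length t'" "w \<in> lists alphabet" "length w \<le> D"
    "val (take i0 g) * val w = val g * val (take k t')"
    using right_bigon_tail_fellow[OF V' t'(1) i0] by blast
  have eW: "val (take i0 g) * val (w @ drop k t') = val g * val t"
    using kw(4) val_take_drop[of k t'] t'(2) by (simp add: mult.assoc[symmetric]) (metis mult.assoc)
  have "area_le relators (drop i0 g @ t) (w @ drop k t') (length g - i0 + 1)"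
    using area_le_tail_chain[OF geodesic_word_lists[OF gg] tG tC fellow, where i = i0 and W = "w @ drop k t'"]
      i0 kw t' tC t'G eW by simp
  moreover have "val (take i0 g) * val w * val (drop k t') = val h"
    using eW e by (simp add: mult.assoc)
  ultimately show ?thesis using that[of w "drop k t'"] kw t' tC t'G by simp
qed

lemma right_bigon_lopsided:
  assumes IH: "bigons_bounded_below m" and V: "right_bigon g t h"
    and m: "m = length g + length h" "200 * D + 200 \<le> m" and lop: "3 * length h < 2 * length g"
  shows "area_le relators (g @ t) h (bigon_area m)"
proof -
  define G H i0 where "G = length g" and "H = length h" and "i0 = length h + D + 1"
  have gg: "geodesic_word g" and gh: "geodesic_word h" using V unfolding right_bigon_def by auto
  have i0G: "i0 \<le> G" using m lop unfolding i0_def G_def H_def by linarith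
  obtain w u where w: "w \<in> lists alphabet" "length w \<le> D" and u: "u \<in> lists alphabet" "length u \<le> D + 1"
    and e: "val (take i0 g) * val w * val u = val h"
    and tail: "area_le relators (drop i0 g @ t) (w @ u) (G - i0 + 1)"
    using right_bigon_tail_area_le[OF V] i0G unfolding i0_def G_def by blast
  obtain kk where kk: "geodesic_word kk" "val kk = val (take i0 g @ w)"
    using geodesic_word_exists by metis
  have kkl: "length kk \<le> i0 + D"
    using geodesic_word_le[OF kk(1), of "take i0 g @ w"] kk geodesic_word_lists[OF gg] w i0G
    unfolding G_def by simp
  have V1: "right_bigon (take i0 g) w kk" and V2: "right_bigon kk u h"
    unfolding right_bigon_def using geodesic_word_take gg gh kk w u e by auto
  have "length (take i0 g) + length kk < m" "length kk + length h < m"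
    using i0G kkl m lop unfolding G_def H_def i0_def by simp_all
  then have ar1: "area_le relators (take i0 g @ w) kk (bigon_area (i0 + length kk))"
    and ar2: "area_le relators (kk @ u) h (bigon_area (length kk + H))"
    using bigons_bounded_belowD(1)[OF IH V1] bigons_bounded_belowD(1)[OF IH V2] i0G
    unfolding G_def H_def by simp_all
  have "area_le relators (g @ t) ((take i0 g @ w) @ u) (G - i0 + 1)"
    using area_le_prefix[OF tail, of "take i0 g"] by (metis append.assoc append_take_drop_id)
  from area_le_trans[OF area_le_trans[OF this area_le_suffix[OF ar1]] ar2]
  have "area_le relators (g @ t) h
      (G - i0 + 1 + bigon_area (i0 + length kk) + bigon_area (length kk + H))" .
  moreover have "bigon_area (i0 + length kk) + bigon_area (length kk + H) + bigon_area 0 + (G - i0 + 1)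
      \<le> bigon_area m"
    by (rule bigon_area_split)
      (use m lop kkl i0G G_def H_def i0_def in \<open>(simp only: distrib_left) | linarith\<close>)+
  ultimately show ?thesis using area_le_mono by (simp add: add.commute add.left_commute)
qed

lemma left_bigon_midpoint:
  assumes W: "left_bigon s g h" and bal: "2 * length g \<le> 3 * length h"
    and big: "200 * D + 200 \<le> length g + length h"
  obtains k w where "k \<le> length g" "w \<in> lists alphabet" "length w \<le> D"
    "val (take (length h div 2) h) * val w = val s * val (take k g)"
proof -
  define j where "j = length h div 2"
  have gg: "geodesic_word g" and gh: "geodesic_word h" and s: "s \<in> lists alphabet" "length s \<le> D + 1"
    and e: "val s * val g = val h"
    using W unfolding left_bigon_def by auto
  obtain s' where s': "geodesic_word s'" "val s' = val s" "length s' \<le> length s"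
    using geodesic_word_shorten[OF s(1)] by blast
  have e': "val s' * val g = val h" using e s' by simp
  have jh: "j \<le> length h" unfolding j_def by simp
  from thin_triangle_words(1)[OF s'(1) gg gh e' jh]
  consider (near_s) i where "i \<le> length s'" "reaches (val (take i s')) (val (take j h))"
    | (near_g) k where "k \<le> length g" "reaches (val (take j h)) (val s' * val (take k g))"
    by blast
  then show ?thesis
  proof cases
    case near_s
    then obtain w where w: "w \<in> lists alphabet" "length w \<le> D" "val (take i s') * val w = val (take j h)"
      unfolding reaches_def by blast
    then have "length (take j h) \<le> length (take i s' @ w)"
      using geodesic_word_le[OF geodesic_word_take[OF gh, of j], of "take i s' @ w"]
        geodesic_word_lists[OF s'(1)] by simp
    then have "j \<le> D + 1 + D" using w(2) s'(3) s(2) jh by simp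
    then show ?thesis using bal big unfolding j_def by linarith
  next
    case near_g then show ?thesis using that s'(2) unfolding reaches_def j_def by auto
  qed
qed

lemma left_bigon_split:
  assumes W: "left_bigon s g h" and k: "k \<le> length g" and j: "j \<le> length h"
    and w: "w \<in> lists alphabet" "length w \<le> D" "val (take j h) * val w = val s * val (take k g)"
  obtains kk where "left_bigon s (take k g) kk" "right_bigon (take j h) w kk"
    "left_bigon w (drop k g) (drop j h)" "length h + k \<le> length g + j + D" "length kk \<le> j + D"
proof -
  have gg: "geodesic_word g" and gh: "geodesic_word h" and sG: "s \<in> lists alphabet"
    and sC: "length s \<le> D + 1" and e: "val s * val g = val h"
    using W unfolding left_bigon_def by auto
  have "val (take j h @ w @ drop k g) = val h"
    using w(3) e val_take_drop[of k g] by (simp add: mult.assoc[symmetric]) (metis mult.assoc)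
  then have "length h \<le> length (take j h @ w @ drop k g)"
    using geodesic_word_le[OF gh, of "take j h @ w @ drop k g"] geodesic_word_lists[OF gh]
      geodesic_word_lists[OF gg] w(1) by simp
  then have hk: "length h + k \<le> length g + j + D" using w(2) j k by simp
  obtain kk where kk: "geodesic_word kk" "val kk = val (s @ take k g)"
    using geodesic_word_exists by metis
  have ekk: "val (take j h) * val w = val kk" using w(3) kk(2) by simp
  have kkl: "length kk \<le> j + D"
    using geodesic_word_le[OF kk(1), of "take j h @ w"] ekk geodesic_word_lists[OF gh] w j by simp
  have eB: "val w * val (drop k g) = val (drop j h)"
  proof (rule left_cancel[of "val (take j h)"])
    show "val (take j h) * (val w * val (drop k g)) = val (take j h) * val (drop j h)"
      using w(3) e val_take_drop[of k g] val_take_drop[of j h]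
      by (simp add: mult.assoc[symmetric]) (metis mult.assoc)
  qed
  have "left_bigon s (take k g) kk" "right_bigon (take j h) w kk" "left_bigon w (drop k g) (drop j h)"
    unfolding left_bigon_def right_bigon_def
    using geodesic_word_take geodesic_word_drop gg gh kk sG sC w ekk eB by auto
  with hk kkl show ?thesis using that by blast
qed

lemma left_bigon_balanced:
  assumes IH: "bigons_bounded_below m" and W: "left_bigon s g h"
    and m: "m = length g + length h" "200 * D + 200 \<le> m" and bal: "2 * length g \<le> 3 * length h"
  shows "area_le relators (s @ g) h (bigon_area m)"
proof -
  define G H j where "G = length g" and "H = length h" and "j = length h div 2"
  have HGC: "H \<le> D + 1 + G" using left_bigon_length_le[OF W] unfolding G_def H_def .
  have jH: "2 * j \<le> H" "H \<le> 2 * j + 1" unfolding j_def H_def by auto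
  obtain k w where k: "k \<le> G" and w: "w \<in> lists alphabet" "length w \<le> D"
    "val (take j h) * val w = val s * val (take k g)"
    using left_bigon_midpoint[OF W bal] m unfolding G_def j_def by metis
  have kg: "k \<le> length g" and jh: "j \<le> length h" using k jH unfolding G_def H_def by auto
  obtain kk where WA: "left_bigon s (take k g) kk" and VA: "right_bigon (take j h) w kk"
    and WB: "left_bigon w (drop k g) (drop j h)" and hk: "H + k \<le> G + j + D" and kkl: "length kk \<le> j + D"
    using left_bigon_split[OF W kg jh w] unfolding G_def H_def by blast
  have lk: "length (take k g) = k" "length (drop k g) = G - k"
    and lj: "length (take j h) = j" "length (drop j h) = H - j"
    using k jH unfolding G_def H_def by auto
  have "area_le relators (s @ take k g) kk (bigon_area (k + length kk))"
    using bigons_bounded_belowD(2)[OF IH WA] lk kkl hk m jH bal unfolding G_def H_def by (simp; linarith)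
  then have c1: "area_le relators (s @ g) (kk @ drop k g) (bigon_area (k + length kk))"
    using area_le_suffix[of relators _ _ _ "drop k g"] by (metis append.assoc append_take_drop_id)
  have ar2: "area_le relators (take j h @ w) kk (bigon_area (j + length kk))"
    using bigons_bounded_belowD(1)[OF IH VA] lj kkl m jH bal HGC unfolding G_def H_def by (simp; linarith)
  have c2: "area_le relators (kk @ drop k g) (take j h @ (w @ drop k g)) (bigon_area (j + length kk))"
    using area_le_suffix[OF area_le_sym[OF ar2], of "drop k g"] by simp
  have ar3: "area_le relators (w @ drop k g) (drop j h) (bigon_area (G - k + (H - j)))"
    using bigons_bounded_belowD(2)[OF IH WB] lk lj m jH bal unfolding G_def H_def by (simp; linarith)
  have c3: "area_le relators (take j h @ (w @ drop k g)) h (bigon_area (G - k + (H - j)))"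
    using area_le_prefix[OF ar3, of "take j h"] by simp
  have "area_le relators (s @ g) h
      (bigon_area (k + length kk) + bigon_area (j + length kk) + bigon_area (G - k + (H - j)))"
    using area_le_trans[OF area_le_trans[OF c1 c2] c3] .
  moreover have "bigon_area (k + length kk) + bigon_area (j + length kk) + bigon_area (G - k + (H - j)) + 0
      \<le> bigon_area m"
    by (rule bigon_area_split)
      (use m jH k bal hk kkl HGC G_def H_def in \<open>(simp only: distrib_left) | linarith\<close>)+
  ultimately show ?thesis using area_le_mono by simp
qed

lemma left_bigon_head_fellow:
  assumes W: "left_bigon s g h" and s: "geodesic_word s" and k: "k + length h + D + 1 \<le> length g"
  obtains i w where "i \<le> length s" "w \<in> lists alphabet" "length w \<le> D"
    "val (take i s) * val w = val s * val (take k g)"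
proof -
  have gg: "geodesic_word g" and gh: "geodesic_word h" and e: "val s * val g = val h"
    using W unfolding left_bigon_def by auto
  have "k \<le> length g" using k by simp
  from thin_triangle_words(3)[OF s gg gh e this]
  consider (near_s) i where "i \<le> length s" "reaches (val (take i s)) (val s * val (take k g))"
    | (near_h) j where "j \<le> length h" "reaches (val s * val (take k g)) (val (take j h))"
    by blast
  then show ?thesis
  proof cases
    case near_h
    then obtain w where w: "w \<in> lists alphabet" "length w \<le> D"
        "val s * val (take k g) * val w = val (take j h)"
      unfolding reaches_def by blast
    have "val (w @ drop j h) = val (drop k g)"
    proof (rule left_cancel[of "val (s @ take k g)"])
      show "val (s @ take k g) * val (w @ drop j h) = val (s @ take k g) * val (drop k g)"
        using w(3) e val_take_drop[of k g] val_take_drop[of j h]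
        by (simp add: mult.assoc[symmetric]) (metis mult.assoc)
    qed
    then have "length (drop k g) \<le> length (w @ drop j h)"
      using geodesic_word_le[OF geodesic_word_drop[OF gg, of k], of "w @ drop j h"]
        geodesic_word_lists[OF gh] w(1) by simp
    then show ?thesis using w(2) k near_h(1) by simp
  next
    case near_s then show ?thesis using that unfolding reaches_def by blast
  qed
qed

lemma area_le_head_chain:
  assumes s: "s \<in> lists alphabet" "length s \<le> D + 1" and g: "g \<in> lists alphabet" and k0: "k0 \<le> length g"
    and fellow: "\<And>k. k \<le> k0 \<Longrightarrow> \<exists>S\<in>lists alphabet. length S \<le> 2 * D + 1 \<and> val S = val s * val (take k g)"
  shows "k \<le> k0 \<Longrightarrow> S \<in> lists alphabet \<Longrightarrow> length S \<le> 2 * D + 1 \<Longrightarrow> val S = val s * val (take k g)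
    \<Longrightarrow> area_le relators (s @ take k g) S (k + 1)"
proof (induction k arbitrary: S)
  case 0
  have "area_le relators s S 1" using s 0 by (intro area_le_relators_1) auto
  then show ?case by simp
next
  case (Suc k)
  then have kl: "k < length g" using k0 by simp
  obtain S' where S': "S' \<in> lists alphabet" "length S' \<le> 2 * D + 1" "val S' = val s * val (take k g)"
    using fellow[of k] Suc.prems by auto
  have IH: "area_le relators (s @ take k g) S' (k + 1)" using Suc.IH S' Suc.prems by simp
  have gk: "g ! k \<in> alphabet" using g kl by (meson in_lists_conv_set nth_mem)
  have tk: "take (Suc k) g = take k g @ [g ! k]" using kl by (simp add: take_Suc_conv_app_nth)
  have "val (S' @ [g ! k]) = val S" using S'(3) Suc.prems(4) tk by (simp add: mult.assoc)
  then have "area_le relators (S' @ [g ! k]) S 1"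
    using gk S' Suc.prems by (intro area_le_relators_1) auto
  moreover have "area_le relators (s @ take (Suc k) g) (S' @ [g ! k]) (k + 1)"
    unfolding tk using area_le_suffix[OF IH, of "[g ! k]"] by simp
  ultimately show ?case using area_le_trans by fastforce
qed

lemma left_bigon_head_area_le:
  assumes W: "left_bigon s g h" and k0: "k0 + length h + D + 1 \<le> length g"
  obtains u w where "u \<in> lists alphabet" "length u \<le> D + 1" "w \<in> lists alphabet" "length w \<le> D"
    "val u * val w = val s * val (take k0 g)"
    "area_le relators (s @ take k0 g) (u @ w) (k0 + 1)"
proof -
  have gg: "geodesic_word g" and sG: "s \<in> lists alphabet" and sC: "length s \<le> D + 1"
    using W unfolding left_bigon_def by auto
  obtain s' where s': "geodesic_word s'" "val s' = val s" "length s' \<le> length s"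
    using geodesic_word_shorten[OF sG] by blast
  have W': "left_bigon s' g h" and s'G: "s' \<in> lists alphabet"
    using W s' sC geodesic_word_lists unfolding left_bigon_def by auto
  have fellow: "\<exists>S\<in>lists alphabet. length S \<le> 2 * D + 1 \<and> val S = val s * val (take k g)"
    if k: "k \<le> k0" for k
  proof -
    have "k + length h + D + 1 \<le> length g" using k k0 by linarith
    then obtain i w where "i \<le> length s'" "w \<in> lists alphabet" "length w \<le> D"
      "val (take i s') * val w = val s' * val (take k g)"
      using left_bigon_head_fellow[OF W' s'(1)] by blast
    then show ?thesis using s' sC s'G by (intro bexI[of _ "take i s' @ w"]) auto
  qed
  obtain i w where iw: "i \<le> length s'" "w \<in> lists alphabet" "length w \<le> D"
    "val (take i s') * val w = val s' * val (take k0 g)"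
    using left_bigon_head_fellow[OF W' s'(1) k0] by blast
  have "k0 \<le> length g" using k0 by simp
  then have "area_le relators (s @ take k0 g) (take i s' @ w) (k0 + 1)"
    using area_le_head_chain[OF sG sC geodesic_word_lists[OF gg] _ fellow,
        where k = k0 and S = "take i s' @ w"]
      iw s' sC s'G by simp
  then show ?thesis using that[of "take i s'" w] iw s' sC s'G by simp
qed

lemma left_bigon_lopsided:
  assumes IH: "bigons_bounded_below m" and W: "left_bigon s g h"
    and m: "m = length g + length h" "200 * D + 200 \<le> m" and lop: "3 * length h < 2 * length g"
  shows "area_le relators (s @ g) h (bigon_area m)"
proof -
  define G H k0 where "G = length g" and "H = length h" and "k0 = length g - (length h + D + 1)"
  have gg: "geodesic_word g" and gh: "geodesic_word h" and e: "val s * val g = val h"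
    using W unfolding left_bigon_def by auto
  have k0G: "k0 + H + D + 1 = G" using m lop unfolding k0_def G_def H_def by linarith
  then have "k0 + length h + D + 1 \<le> length g" unfolding G_def H_def by simp
  then obtain u w where u: "u \<in> lists alphabet" "length u \<le> D + 1" and w: "w \<in> lists alphabet" "length w \<le> D"
    and e': "val u * val w = val s * val (take k0 g)"
    and head: "area_le relators (s @ take k0 g) (u @ w) (k0 + 1)"
    using left_bigon_head_area_le[OF W] by blast
  obtain kk where kk: "geodesic_word kk" "val kk = val (w @ drop k0 g)"
    using geodesic_word_exists by metis
  have kkl: "length kk \<le> D + (G - k0)"
    using geodesic_word_le[OF kk(1), of "w @ drop k0 g"] kk geodesic_word_lists[OF gg] w
    unfolding G_def by simp
  have "val u * val kk = val h"
    using kk(2) e' val_take_drop[of k0 g] e by (simp add: mult.assoc[symmetric]) (metis mult.assoc)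
  then have W1: "left_bigon w (drop k0 g) kk" and W2: "left_bigon u kk h"
    unfolding left_bigon_def using geodesic_word_drop gg gh kk w u by auto
  have "length (drop k0 g) + length kk < m" "length kk + length h < m"
    using kkl m lop k0G unfolding G_def H_def by simp_all
  then have ar1: "area_le relators (w @ drop k0 g) kk (bigon_area (G - k0 + length kk))"
    and ar2: "area_le relators (u @ kk) h (bigon_area (length kk + H))"
    using bigons_bounded_belowD(2)[OF IH W1] bigons_bounded_belowD(2)[OF IH W2]
    unfolding G_def H_def by simp_all
  have "area_le relators (s @ g) (u @ (w @ drop k0 g)) (k0 + 1)"
    using area_le_suffix[OF head, of "drop k0 g"] by (metis append.assoc append_take_drop_id)
  from area_le_trans[OF area_le_trans[OF this area_le_prefix[OF ar1]] ar2]
  have "area_le relators (s @ g) h (k0 + 1 + bigon_area (G - k0 + length kk) + bigon_area (length kk + H))" .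
  moreover have "bigon_area (G - k0 + length kk) + bigon_area (length kk + H) + bigon_area 0 + (k0 + 1)
      \<le> bigon_area m"
    by (rule bigon_area_split)
      (use m lop kkl k0G G_def H_def in \<open>(simp only: distrib_left) | linarith\<close>)+
  ultimately show ?thesis using area_le_mono by (simp add: add.commute add.left_commute)
qed

lemma bigon_area_le:
  shows right_bigon_area_le:
      "right_bigon g t h \<Longrightarrow> area_le relators (g @ t) h (bigon_area (length g + length h))"
    and left_bigon_area_le: "left_bigon s g h \<Longrightarrow> area_le relators (s @ g) h (bigon_area (length g + length h))"
proof -
  have "bigons_bounded_below m" for m
  proof (induction m rule: less_induct)
    case (less m)
    show ?case
      unfolding bigons_bounded_below_def
    proof (intro conjI allI impI)
      fix g t h assume V: "right_bigon g t h" and lt: "length g + length h < m"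
      have IH: "bigons_bounded_below (length g + length h)" using less lt by blast
      show "area_le relators (g @ t) h (bigon_area (length g + length h))"
        using bigon_area_base(1)[OF _ V] right_bigon_balanced[OF IH V] right_bigon_lopsided[OF IH V]
        by (cases "length g + length h < 200 * D + 200") (simp, linarith)
    next
      fix s g h assume W: "left_bigon s g h" and lt: "length g + length h < m"
      have IH: "bigons_bounded_below (length g + length h)" using less lt by blast
      show "area_le relators (s @ g) h (bigon_area (length g + length h))"
        using bigon_area_base(2)[OF _ W] left_bigon_balanced[OF IH W] left_bigon_lopsided[OF IH W]
        by (cases "length g + length h < 200 * D + 200") (simp, linarith)
    qed
  qed
  then show "right_bigon g t h \<Longrightarrow> area_le relators (g @ t) h (bigon_area (length g + length h))"
    and "left_bigon s g h \<Longrightarrow> area_le relators (s @ g) h (bigon_area (length g + length h))"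
    using bigons_bounded_belowD less_add_Suc1 by blast+
qed

subsection \<open>The finite presentation and its Dehn function\<close>

lemma area_le_geodesic_word:
  "u \<in> lists alphabet
    \<Longrightarrow> \<exists>h. geodesic_word h \<and> val h = val u \<and> area_le relators u h (length u * bigon_area (2 * length u))"
proof (induction u rule: rev_induct)
  case Nil
  have "geodesic_word []" unfolding geodesic_word_def by auto
  then show ?case using area_le_refl by fastforce
next
  case (snoc a u)
  then have uG: "u \<in> lists alphabet" and aG: "a \<in> alphabet" by auto
  obtain h' where h': "geodesic_word h'" "val h' = val u"
      "area_le relators u h' (length u * bigon_area (2 * length u))"
    using snoc.IH[OF uG] by blast
  obtain h where h: "geodesic_word h" "val h = val (u @ [a])"
    using geodesic_word_exists by metis
  have "length h' + length h \<le> 2 * length (u @ [a])"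
    using geodesic_word_le[OF h'(1) uG] geodesic_word_le[OF h(1), of "u @ [a]"] snoc.prems h'(2) h(2) by simp
  moreover have "right_bigon h' [a] h"
    unfolding right_bigon_def using h' h aG by auto
  ultimately have "area_le relators (h' @ [a]) h (bigon_area (2 * length (u @ [a])))"
    using area_le_mono[OF right_bigon_area_le] mono_bigon_area by (meson monoD)
  moreover have "area_le relators (u @ [a]) (h' @ [a]) (length u * bigon_area (2 * length (u @ [a])))"
    using area_le_mono[OF area_le_suffix[OF h'(3)]] mono_bigon_area by (simp add: monoD)
  ultimately have "area_le relators (u @ [a]) h
      (length u * bigon_area (2 * length (u @ [a])) + bigon_area (2 * length (u @ [a])))"
    using area_le_trans by blast
  then show ?case using h by (intro exI[of _ h]) (simp add: algebra_simps)
qed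

lemma area_le_relators:
  assumes "u \<in> lists alphabet" "v \<in> lists alphabet" "val u = val v"
  shows "area_le relators u v (word_area_bound (length u + length v))"
proof -
  define n where "n = length u + length v"
  obtain hu where hu: "geodesic_word hu" "val hu = val u"
      "area_le relators u hu (length u * bigon_area (2 * length u))"
    using area_le_geodesic_word assms(1) by blast
  obtain hv where hv: "geodesic_word hv" "val hv = val v"
      "area_le relators v hv (length v * bigon_area (2 * length v))"
    using area_le_geodesic_word assms(2) by blast
  have "right_bigon hu [] hv" unfolding right_bigon_def using hu hv assms by auto
  moreover have "length hu + length hv \<le> 2 * n"
    using geodesic_word_le[OF hu(1) assms(1)] geodesic_word_le[OF hv(1) assms(2)] hu(2) hv(2)
    unfolding n_def by simp
  ultimately have "area_le relators hu hv (bigon_area (2 * n))"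
    using area_le_mono[OF right_bigon_area_le] mono_bigon_area by (metis append_Nil2 monoD)
  moreover have "area_le relators u hu (length u * bigon_area (2 * n))"
    and "area_le relators v hv (length v * bigon_area (2 * n))"
    using area_le_mono[OF hu(3)] area_le_mono[OF hv(3)] mono_bigon_area unfolding n_def
    by (simp_all add: monoD)
  ultimately have "area_le relators u v
      (length u * bigon_area (2 * n) + bigon_area (2 * n) + length v * bigon_area (2 * n))"
    using area_le_trans[OF area_le_trans area_le_sym] by blast
  moreover have "length u * bigon_area (2 * n) + bigon_area (2 * n) + length v * bigon_area (2 * n)
      = word_area_bound n"
    unfolding word_area_bound_def n_def by (simp add: algebra_simps)
  ultimately show ?thesis unfolding n_def by simp
qed

lemma finite_relators: "finite relators"
proof -
  let ?W = "{w. set w \<subseteq> alphabet \<and> length w \<le> 210 * D + 220}"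
  have "relators \<subseteq> ?W \<times> ?W" unfolding relators_def by auto
  moreover have "finite ?W" by (rule finite_lists_length_le) simp
  ultimately show ?thesis by (meson finite_SigmaI finite_subset)
qed

lemma finite_presentation_relators: "finite_presentation alphabet relators \<phi>"
  unfolding finite_presentation_def is_presentation_def
proof (intro conjI ballI allI)
  show "finite relators" by (rule finite_relators)
  show "relators \<subseteq> lists alphabet \<times> lists alphabet" unfolding relators_def by auto
  fix m show "\<exists>w\<in>lists alphabet. val w = m" by (rule word_exists)
next
  fix u v assume "u \<in> lists alphabet" "v \<in> lists alphabet"
  moreover have "(u, v) \<in> (rstep relators)\<^sup>* \<Longrightarrow> val u = val v"
    by (rule rtrancl_rstep_eval_eq) (auto simp: relators_def)
  ultimately show "(val u = val v) = ((u, v) \<in> (rstep relators)\<^sup>*)"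
    using area_le_relators area_le_imp_rtrancl by blast
qed simp

end

lemma dehn_le_of_area_le:
  assumes "finite G" and "mono f"
    and "\<And>u v. u \<in> lists G \<Longrightarrow> v \<in> lists G \<Longrightarrow> eval_word \<phi> u = eval_word \<phi> v
      \<Longrightarrow> area_le R u v (f (length u + length v))"
  shows "dehn G R \<phi> n \<le> f n"
proof -
  define S where "S = {area R u v | u v. u \<in> lists G \<and> v \<in> lists G \<and> eval_word \<phi> u = eval_word \<phi> v
    \<and> length u + length v \<le> n}"
  define W where "W = {w. set w \<subseteq> G \<and> length w \<le> n}"
  have "finite W" unfolding W_def using assms(1) by (rule finite_lists_length_le)
  moreover have "S \<subseteq> (\<lambda>(u, v). area R u v) ` (W \<times> W)"
    unfolding S_def W_def by auto
  ultimately have "finite S" by (meson finite_SigmaI finite_imageI finite_subset)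
  moreover have "S \<noteq> {}" unfolding S_def by (auto intro!: exI[of _ "[]"])
  moreover have "x \<le> f n" if x: "x \<in> S" for x
  proof -
    obtain u v where uv: "x = area R u v" "u \<in> lists G" "v \<in> lists G" "eval_word \<phi> u = eval_word \<phi> v"
      "length u + length v \<le> n"
      using x unfolding S_def by blast
    then have "x \<le> f (length u + length v)" using assms(3) area_le_imp_area_le by blast
    also have "\<dots> \<le> f n" using \<open>mono f\<close> uv(5) by (rule monoD)
    finally show ?thesis .
  qed
  ultimately show ?thesis unfolding dehn_def S_def[symmetric] by simp
qed

lemma area_le_poly_of_word_area_bound:
  assumes "area_le R u v (c * n + c * word_area_bound (L * n))" and "n = length u + length v"
  shows "area_le R u v (c * (1 + 30 * (2 * L + 1) ^ 6) * n ^ 6)"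
proof (cases "n = 0")
  case True
  then show ?thesis using assms(2) area_le_refl by simp
next
  case False
  then have "n \<le> n ^ 6" by (simp add: self_le_power)
  with False have "c * n + c * word_area_bound (L * n) \<le> c * n ^ 6 + c * (30 * (2 * L + 1) ^ 6 * n ^ 6)"
    using word_area_bound_le[of n L] by (intro add_mono mult_le_mono2) auto
  then show ?thesis using area_le_mono[OF assms(1)] by (simp add: algebra_simps)
qed

lemma dehn_le_power_of_le_poly:
  fixes f :: "nat \<Rightarrow> nat" and d :: nat
  assumes f: "\<And>j. f j \<le> c * j ^ d" and "0 < d" and d: "real d \<le> \<alpha>"
  shows "dehn_le_power f \<alpha>"
proof -
  define a where "a = real c + 1"
  have "real (f j) \<le> a * (a * real j) powr \<alpha> + a * real j" for j
  proof (cases "j = 0")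
    case True then show ?thesis using f[of 0] \<open>0 < d\<close> by (simp add: power_0_left)
  next
    case False
    then have j1: "1 \<le> real j" by simp
    have "1 \<le> a * real j" using j1 unfolding a_def by (simp add: mult_le_mono order_trans[OF j1])
    have "real (f j) \<le> real c * real j powr d"
      using f[of j] j1 by (simp add: powr_realpow) (metis of_nat_le_iff of_nat_mult of_nat_power)
    also have "\<dots> \<le> a * (a * real j) powr d"
      using j1 \<open>1 \<le> a * real j\<close> unfolding a_def by (intro mult_mono powr_mono2) auto
    also have "\<dots> \<le> a * (a * real j) powr \<alpha>"
      using \<open>1 \<le> a * real j\<close> d unfolding a_def by (intro mult_left_mono powr_mono) auto
    finally have "real (f j) \<le> a * (a * real j) powr \<alpha>" .
    moreover have "0 \<le> a * real j" unfolding a_def by simp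
    ultimately show ?thesis by linarith
  qed
  then show ?thesis unfolding dehn_le_power_def a_def by (intro exI[of _ "real c + 1"]) auto
qed

lemma six_le_log: "6 \<le> log (4/3) 5 + (1::real)"
proof -
  have "(4/3::real) powr 5 = (4/3) ^ 5" by (simp add: powr_realpow)
  also have "\<dots> \<le> 5" by (simp add: power_divide)
  finally have "5 \<le> log (4/3) (5::real)" by (subst le_log_iff) auto
  then show ?thesis by simp
qed

theorem theorem5p6:
  fixes A :: "'m::monoid_mult set" and \<delta> :: real
  assumes "left_cancellative TYPE('m)"
    and "\<delta> \<ge> 0" and "finite A" and "generates A"
    and "strongly_hyperbolic A \<delta>"
  shows "(\<exists>G R (\<phi> :: nat \<Rightarrow> 'm). finite_presentation G R \<phi>)
    \<and> (\<forall>G R (\<phi> :: nat \<Rightarrow> 'm). finite_presentation G R \<phi> \<longrightarrow>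
          dehn_le_power (dehn G R \<phi>) (log (4/3) 5 + 1))"
proof -
  obtain xs where xs: "set xs = A" using finite_list assms(3) by blast
  interpret hyperbolic_numbering A \<delta> "length xs" "(!) xs"
    using assms(1,4,5) xs unfolding left_cancellative_def by unfold_locales (auto simp: in_set_conv_nth)
  have "dehn_le_power (dehn G R \<phi>) (log (4/3) 5 + 1)" if P: "finite_presentation G R \<phi>"
    for G R and \<phi> :: "nat \<Rightarrow> 'm"
  proof -
    obtain c L where "\<And>u v. u \<in> lists G \<Longrightarrow> v \<in> lists G \<Longrightarrow> eval_word \<phi> u = eval_word \<phi> v
      \<Longrightarrow> area_le R u v (c * (length u + length v) + c * word_area_bound (L * (length u + length v)))"
      using finite_presentation_area_transfer[OF finite_presentation_relators area_le_relators
          mono_word_area_bound P] by blast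
    then have "dehn G R \<phi> j \<le> c * (1 + 30 * (2 * L + 1) ^ 6) * j ^ 6" for j
      using P area_le_poly_of_word_area_bound unfolding finite_presentation_def
      by (intro dehn_le_of_area_le) (auto intro!: monoI power_mono)
    then show ?thesis
      using six_le_log by (intro dehn_le_power_of_le_poly[of _ _ 6]) auto
  qed
  then show ?thesis using finite_presentation_relators by blast
qed

end
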